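(* Let $L\ge 2$ and $N_{\mathrm{em}}\ge1$ be integers and $p_{\mathrm{src}}\in[0,1]$. Let $\bm{\nu}=\{\nu_0,\dots,\nu_L\}$ be non-negative constants with $\nu_M=0$ for all $M<Lp_{\mathrm{src}}$. Suppose $\eta_1,\delta_1$ satisfy $$\max_{Q\in\mathcal{Q}}2^{-N_{\mathrm{em}}D(Q\|\mathfrak{b}_{L,p_{\mathrm{src}}})}\le\eta_1,\qquad \mathcal{Q}:=\{Q\in\mathcal{P}_{\mathcal{M}}: \mathbb{E}_{M\sim Q}[\nu_M]\ge\mathbb{E}_{M\sim\mathfrak{b}_{L,p_{\mathrm{src}}}}[\nu_M]+\delta_1\}.$$ If the random variables $(\bm{v},N,m^N,u^N,x^N)$ described in the context satisfy conditions (A) and (B), then $$\Pr\{N\ge1,\ \tilde P_{m^N,u^N,x^N}\notin\mathcal{P}^{N,\bm{\nu},\delta_1}\}\le\eta_1.$$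
   Context: For a finite set $\Omega$, $\mathcal{P}_\Omega$ denotes the set of probability mass functions on $\Omega$; for $\omega^n\in\Omega^n$ the type is $\tilde P_{\omega^n}(\omega)=\frac1n|\{i:\omega_i=\omega\}|$ ($\tilde P_{m^N,u^N,x^N}$ is the type of the sequence of triples $(m_k,u_k,x_k)$). Let $\mathcal{M}=\{0,\dots,L\}$, $\mathcal{U}=\mathcal{X}=\{0,1\}$, $\mathcal{W}=\{(M,U,X)\in\mathcal{M}\times\mathcal{U}\times\mathcal{X}:0\le M-U-X\le L-2\}$; for $P\in\mathcal{P}_{\mathcal{W}}$, $P_{\mathcal{M}}$ is the distribution of the first coordinate. $\mathfrak{b}_{L,p}(M):=\binom{L}{M}p^M(1-p)^{L-M}$; $D$ is the Kullback–Leibler divergence (base 2). Random variables: on a common probability space (probability $\Pr$), $\bm{v}=(v_0,\dots,v_L)$ are non-negative integers summing to $N_{\mathrm{em}}$, $N$ is a non-negative integer, and when $N\ge1$, $m^N\in\mathcal{M}^N$, $u^N\in\mathcal{U}^N$, $x^N\in\mathcal{X}^N$ with $(m_k,u_k,x_k)\in\mathcal{W}$. (A) There is $p_{\mathrm{odd}}\le p_{\mathrm{src}}$ with $\Pr\{\bm{v}\}=\frac{N_{\mathrm{em}}!}{\prod_M v_M!}\prod_M(\mathfrak{b}_{L,p_{\mathrm{odd}}}(M))^{v_M}$. (B) For all $M\in\mathcal{M}$, $\Pr\{N\tilde P_{m^N}(M)\le v_M\mid N\ge1\}=1$. $\mathcal{P}^{N,\bm{\nu},\delta_1}:=\{P\in\mathcal{P}_{\mathcal{W}}:\mathbb{E}_{M\sim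 P_{\mathcal{M}}}[\nu_M]\le\frac{N_{\mathrm{em}}}{N}(\mathbb{E}_{M\sim\mathfrak{b}_{L,p_{\mathrm{src}}}}[\nu_M]+\delta_1)\}$. *)

theory Defs
  imports "HOL-Probability.Probability"
begin

definition binom_mass :: "nat \<Rightarrow> real \<Rightarrow> nat \<Rightarrow> real" where
  "binom_mass L p M = real (L choose M) * p ^ M * (1 - p) ^ (L - M)"

definition is_pmf_on :: "'b set \<Rightarrow> ('b \<Rightarrow> real) \<Rightarrow> bool" where
  "is_pmf_on A Q \<longleftrightarrow> (\<forall>a. 0 \<le> Q a) \<and> (\<forall>a. a \<notin> A \<longrightarrow> Q a = 0) \<and> (\<Sum>a\<in>A. Q a) = 1"

definition Walph :: "nat \<Rightarrow> (nat \<times> nat \<times> nat) set" where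
  "Walph L = {(M, U, X). M \<le> L \<and> U \<le> 1 \<and> X \<le> 1 \<and>
      0 \<le> int M - int U - int X \<and> int M - int U - int X \<le> int L - 2}"

definition expect_on :: "'b set \<Rightarrow> ('b \<Rightarrow> real) \<Rightarrow> ('b \<Rightarrow> real) \<Rightarrow> real" where
  "expect_on A Q f = (\<Sum>a\<in>A. Q a * f a)"

definition kl_div :: "'b set \<Rightarrow> ('b \<Rightarrow> real) \<Rightarrow> ('b \<Rightarrow> real) \<Rightarrow> ereal" where
  "kl_div A Q P =
     (if \<exists>a\<in>A. Q a > 0 \<and> P a = 0 then \<infinity>
      else ereal (\<Sum>a\<in>A. if Q a = 0 then 0 else Q a * log 2 (Q a / P a)))"

definition exp2_neg :: "real \<Rightarrow> ereal \<Rightarrow> real" where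
  "exp2_neg n D = (if D = \<infinity> then 0 else 2 powr (- n * real_of_ereal D))"

definition marginal_M :: "(nat \<times> nat \<times> nat \<Rightarrow> real) \<Rightarrow> nat \<Rightarrow> real" where
  "marginal_M P M = (\<Sum>U\<le>1. \<Sum>X\<le>1. P (M, U, X))"

definition emp_type :: "nat \<Rightarrow> (nat \<Rightarrow> 'b) \<Rightarrow> 'b \<Rightarrow> real" where
  "emp_type n w a = real (card {k. k < n \<and> w k = a}) / real n"

definition calQ :: "nat \<Rightarrow> real \<Rightarrow> (nat \<Rightarrow> real) \<Rightarrow> real \<Rightarrow> (nat \<Rightarrow> real) set" where
  "calQ L psrc nu \<delta>1 = {Q. is_pmf_on {..L} Q \<and>
      expect_on {..L} Q nu \<ge> expect_on {..L} (binom_mass L psrc) nu + \<delta>1}"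

definition calP :: "nat \<Rightarrow> nat \<Rightarrow> nat \<Rightarrow> real \<Rightarrow> (nat \<Rightarrow> real) \<Rightarrow> real
                     \<Rightarrow> (nat \<times> nat \<times> nat \<Rightarrow> real) set" where
  "calP L Nem N psrc nu \<delta>1 = {P. is_pmf_on (Walph L) P \<and>
      expect_on {..L} (marginal_M P) nu
        \<le> real Nem / real N * (expect_on {..L} (binom_mass L psrc) nu + \<delta>1)}"

end

theory Submission
  imports Defs
begin

(* Proof idea: by (A) the counts v are multinomial with cell probabilities b_{L,p_odd}, and by (B)
   almost surely N * type(m)(M) <= v_M for every M. Since nu >= 0, a type outside P^{N,nu,delta_1}
   therefore forces the multinomial tail event  sum_M v_M nu_M >= N_em t,  t = E_b[nu] + delta_1.
   For M >= L p the mass b_{L,p}(M) is nondecreasing in p, and nu vanishes below L p_src, so every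
   Chernoff bound E[2^(l (nu - t))]^N_em of this tail under p_odd is dominated by the one under p_src.
   If for some l >= 0 the exponentially tilted distribution Q_l ~ b 2^(l nu) has mean t (or l = 0 and
   mean >= t), that bound equals 2^(-N_em D(Q_l || b)) with Q_l in the set Q. Otherwise nu <= t on
   the support of b, and as l -> infinity the bounds tend to b{nu = t}^N_em = 2^(-N_em D(Q || b)) for
   Q the conditioning of b on {nu = t}. *)

section \<open>The multinomial theorem\<close>

definition count_vectors :: "'b set \<Rightarrow> nat \<Rightarrow> ('b \<Rightarrow> nat) set" where
  "count_vectors I n = {w. (\<forall>i. i \<notin> I \<longrightarrow> w i = 0) \<and> sum w I = n}"

definition multinomial_term :: "'b set \<Rightarrow> nat \<Rightarrow> ('b \<Rightarrow> real) \<Rightarrow> ('b \<Rightarrow> nat) \<Rightarrow> real" where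
  "multinomial_term I n a w = fact n / (\<Prod>i\<in>I. fact (w i)) * (\<Prod>i\<in>I. a i ^ w i)"

lemma finite_count_vectors:
  assumes "finite I"
  shows "finite (count_vectors I n)"
proof -
  have "count_vectors I n \<subseteq> (\<lambda>g i. if i \<in> I then g i else 0) ` PiE I (\<lambda>_. {..n})"
  proof
    fix w assume w: "w \<in> count_vectors I n"
    then have "w i \<le> n" if "i \<in> I" for i
      using assms that member_le_sum[of i I w] unfolding count_vectors_def by auto
    then have "restrict w I \<in> PiE I (\<lambda>_. {..n})" by auto
    moreover have "w = (\<lambda>i. if i \<in> I then restrict w I i else 0)"
      using w unfolding count_vectors_def by auto
    ultimately show "w \<in> (\<lambda>g i. if i \<in> I then g i else 0) ` PiE I (\<lambda>_. {..n})" by blast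
  qed
  then show ?thesis using assms by (meson finite_PiE finite_atMost finite_imageI finite_subset)
qed

lemma count_vectors_empty: "count_vectors {} n = (if n = 0 then {\<lambda>_. 0} else {})"
  unfolding count_vectors_def by auto

lemma count_vectors_insert:
  assumes "finite I" "j \<notin> I"
  shows "bij_betw (\<lambda>(k, w). w(j := k)) (SIGMA k:{..n}. count_vectors I (n - k))
           (count_vectors (insert j I) n)"
proof (rule bij_betw_byWitness[where f' = "\<lambda>w. (w j, w(j := 0))"])
  have sum_upd: "(\<Sum>i\<in>I. if i = j then k else w i) = sum w I" for w k
    using assms by (intro sum.cong) auto
  show "(\<lambda>(k, w). w(j := k)) ` (SIGMA k:{..n}. count_vectors I (n - k)) \<subseteq> count_vectors (insert j I) n"
    using assms by (auto simp: count_vectors_def sum_upd)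
  show "(\<lambda>w. (w j, w(j := 0))) ` count_vectors (insert j I) n \<subseteq> (SIGMA k:{..n}. count_vectors I (n - k))"
    using assms by (auto simp: count_vectors_def sum_upd)
qed (use assms in \<open>auto simp: count_vectors_def\<close>)

lemma multinomial_term_insert:
  assumes "finite I" "j \<notin> I" "k \<le> n"
  shows "of_nat (n choose k) * a j ^ k * multinomial_term I (n - k) a w
       = multinomial_term (insert j I) n a (w(j := k))"
proof -
  have upd: "(\<Prod>i\<in>I. g i ((w(j := k)) i)) = (\<Prod>i\<in>I. g i (w i))" for g :: "'a \<Rightarrow> nat \<Rightarrow> real"
    using assms by (intro prod.cong) auto
  have "of_nat (n choose k) * a j ^ k * multinomial_term I (n - k) a w
      = fact n / (fact k * (\<Prod>i\<in>I. fact (w i))) * (a j ^ k * (\<Prod>i\<in>I. a i ^ w i))"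
    unfolding multinomial_term_def binomial_fact[OF assms(3)] by (simp add: field_simps)
  also have "\<dots> = multinomial_term (insert j I) n a (w(j := k))"
    unfolding multinomial_term_def prod.insert[OF assms(1,2)] fun_upd_same
      upd[of "\<lambda>_. fact"] upd[of "\<lambda>i e. a i ^ e"] ..
  finally show ?thesis .
qed

theorem multinomial_theorem:
  assumes "finite I"
  shows "(sum a I) ^ n = (\<Sum>w\<in>count_vectors I n. multinomial_term I n a w)"
  using assms
proof (induction I arbitrary: n rule: finite_induct)
  case empty
  then show ?case by (simp add: count_vectors_empty multinomial_term_def)
next
  case (insert j I)
  have "(sum a (insert j I)) ^ n = (\<Sum>k\<le>n. of_nat (n choose k) * a j ^ k * (sum a I) ^ (n - k))"
    using insert.hyps by (simp add: binomial_ring)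
  also have "\<dots> = (\<Sum>k\<le>n. \<Sum>w\<in>count_vectors I (n - k). multinomial_term (insert j I) n a (w(j := k)))"
    using insert by (simp add: sum_distrib_left multinomial_term_insert)
  also have "\<dots> = (\<Sum>(k, w)\<in>(SIGMA k:{..n}. count_vectors I (n - k)). multinomial_term (insert j I) n a (w(j := k)))"
    using insert.hyps by (intro sum.Sigma) (auto intro: finite_count_vectors)
  also have "\<dots> = (\<Sum>w\<in>count_vectors (insert j I) n. multinomial_term (insert j I) n a w)"
    using sum.reindex_bij_betw[OF count_vectors_insert[OF insert.hyps]]
    by (simp add: case_prod_unfold)
  finally show ?case .
qed

lemma multinomial_term_nonneg: "\<forall>i\<in>I. 0 \<le> a i \<Longrightarrow> 0 \<le> multinomial_term I n a w"
  unfolding multinomial_term_def by (simp add: prod_nonneg)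

lemma is_pmf_on_binom_mass:
  assumes "0 \<le> p" "p \<le> 1"
  shows "is_pmf_on {..L} (binom_mass L p)"
proof -
  have "(\<Sum>M\<le>L. binom_mass L p M) = (p + (1 - p)) ^ L"
    unfolding binom_mass_def binomial_ring by (simp add: mult_ac)
  then show ?thesis
    using assms unfolding is_pmf_on_def by (auto simp: binom_mass_def)
qed

lemma power_mult_one_minus_power_mono:
  fixes p q :: real
  assumes "0 \<le> q" "q \<le> p" "real L * p \<le> real M" "M \<le> L"
  shows "q ^ M * (1 - q) ^ (L - M) \<le> p ^ M * (1 - p) ^ (L - M)"
proof (cases "M = 0")
  case True
  then have "p \<le> 0 \<or> L = 0" using assms(3) by (auto simp: mult_le_0_iff)
  then have "q = p \<or> L = 0" using assms(1,2) by linarith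
  then show ?thesis
  proof
    assume "q = p"
    then show ?thesis by simp
  next
    assume "L = 0"
    then show ?thesis using True by simp
  qed
next
  case False
  show ?thesis
  proof (rule DERIV_nonneg_imp_nondecreasing[OF assms(2)])
    fix x assume x: "q \<le> x" "x \<le> p"
    have x0: "0 \<le> x" using x assms by simp
    have xM: "real L * x \<le> real M" using x assms by (meson mult_left_mono of_nat_0_le_iff order.trans)
    have x1: "x \<le> 1"
    proof (rule ccontr)
      assume "\<not> x \<le> 1"
      then have "real L < real L * x" using False assms(4) by simp
      then show False using xM assms(4) by simp
    qed
    define D where "D = real M * x ^ (M - 1) * (1 - x) ^ (L - M) - x ^ M * (real (L - M) * (1 - x) ^ (L - M - 1))"
    have "((\<lambda>x. x ^ M * (1 - x) ^ (L - M)) has_real_derivative D) (at x)"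
      unfolding D_def by (auto intro!: derivative_eq_intros)
    moreover have "0 \<le> D"
    proof (cases "M = L")
      case True
      then show ?thesis unfolding D_def using x0 by simp
    next
      case False
      obtain a where a: "M = Suc a" using \<open>M \<noteq> 0\<close> by (cases M) auto
      obtain b where b: "L - M = Suc b" using False assms(4) by (cases "L - M") auto
      have e: "x ^ M = x * x ^ a" "(1 - x) ^ (L - M) = (1 - x) * (1 - x) ^ b" "M - 1 = a" "L - M - 1 = b"
        "real (L - M) = real L - real M"
        using a b assms(4) by (simp_all add: of_nat_diff)
      have "D = x ^ a * (1 - x) ^ b * (real M * (1 - x) - (real L - real M) * x)"
        unfolding D_def e by algebra
      also have "real M * (1 - x) - (real L - real M) * x = real M - real L * x" by algebra
      finally have D_eq: "D = x ^ a * (1 - x) ^ b * (real M - real L * x)" .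
      have "0 \<le> x ^ a * (1 - x) ^ b" using x0 x1 by simp
      moreover have "0 \<le> real M - real L * x" using xM by simp
      ultimately show ?thesis unfolding D_eq by (rule mult_nonneg_nonneg)
    qed
    ultimately show "\<exists>y. ((\<lambda>x. x ^ M * (1 - x) ^ (L - M)) has_real_derivative y) (at x) \<and> 0 \<le> y"
      by blast
  qed
qed

lemma binom_mass_mono:
  assumes "0 \<le> q" "q \<le> p" "real L * p \<le> real M"
  shows "binom_mass L q M \<le> binom_mass L p M"
proof (cases "M \<le> L")
  case True
  then show ?thesis unfolding binom_mass_def
    using power_mult_one_minus_power_mono[OF assms True] by (simp add: mult.assoc mult_left_mono)
qed (simp add: binom_mass_def binomial_eq_0)

section \<open>Exponential tilting and Chernoff bounds\<close>

text \<open>Reweighting of \<open>P\<close> by \<open>c\<close>: exponential tilting for \<open>c i = 2 powr (l * g i)\<close>, conditioning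
  on a set for \<open>c\<close> its indicator.\<close>
definition tilt :: "'b set \<Rightarrow> ('b \<Rightarrow> real) \<Rightarrow> ('b \<Rightarrow> real) \<Rightarrow> 'b \<Rightarrow> real" where
  "tilt I P c a = P a * c a / (\<Sum>b\<in>I. P b * c b)"

lemma is_pmf_on_tilt:
  assumes "is_pmf_on I P" "\<forall>a\<in>I. 0 \<le> c a" "0 < (\<Sum>a\<in>I. P a * c a)"
  shows "is_pmf_on I (tilt I P c)"
proof -
  have "0 \<le> P a * c a" for a
    using assms(1,2) unfolding is_pmf_on_def by (cases "a \<in> I") auto
  then show ?thesis
    using assms unfolding is_pmf_on_def tilt_def by (auto simp: sum_divide_distrib[symmetric])
qed

lemma expect_on_tilt:
  "expect_on I (tilt I P c) f = (\<Sum>a\<in>I. P a * c a * f a) / (\<Sum>a\<in>I. P a * c a)"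
  unfolding expect_on_def tilt_def by (simp add: sum_divide_distrib)

text \<open>For \<open>Q = tilt I P c\<close> one has \<open>log (Q / P) = log c - log Z\<close>, so the last hypothesis makes
  \<open>D(Q || P) = - log Z\<close>.\<close>
lemma exp2_neg_kl_div_tilt:
  assumes "\<forall>a\<in>I. 0 \<le> P a" "\<forall>a\<in>I. 0 \<le> c a" and Z: "0 < (\<Sum>a\<in>I. P a * c a)"
    and "(\<Sum>a\<in>I. P a * c a * log 2 (c a)) = 0"
  shows "exp2_neg n (kl_div I (tilt I P c) P) = (\<Sum>a\<in>I. P a * c a) ^ n"
proof -
  define Z where "Z = (\<Sum>a\<in>I. P a * c a)"
  have log_term: "(if tilt I P c a = 0 then 0 else tilt I P c a * log 2 (tilt I P c a / P a))
      = P a * c a * log 2 (c a) / Z - tilt I P c a * log 2 Z" if "a \<in> I" for a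
  proof (cases "P a = 0 \<or> c a = 0")
    case False
    then have "0 < P a" "0 < c a" using assms(1,2) that by (auto simp: less_le)
    then show ?thesis
      using Z unfolding tilt_def Z_def by (simp add: log_divide log_mult field_simps)
  qed (auto simp: tilt_def Z_def)
  have "sum (tilt I P c) I = 1"
    using Z unfolding tilt_def by (simp add: sum_divide_distrib[symmetric])
  then have "(\<Sum>a\<in>I. if tilt I P c a = 0 then 0 else tilt I P c a * log 2 (tilt I P c a / P a)) = - log 2 Z"
    using assms(4) by (simp add: log_term sum_subtractf sum_divide_distrib[symmetric] sum_distrib_right[symmetric] Z_def)
  moreover have "\<not> (\<exists>a\<in>I. tilt I P c a > 0 \<and> P a = 0)" unfolding tilt_def by auto
  ultimately have "kl_div I (tilt I P c) P = ereal (- log 2 Z)" unfolding kl_div_def by simp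
  then show ?thesis
    using Z unfolding exp2_neg_def Z_def by (simp add: powr_power[symmetric] mult.commute)
qed

lemma tilt_mass_power_le_kl_bound:
  assumes "is_pmf_on I P" "\<forall>i\<in>I. 0 \<le> c i" and Z: "0 < (\<Sum>i\<in>I. P i * c i)"
    and "(\<Sum>i\<in>I. P i * c i * log 2 (c i)) = 0"
    and mean: "t * (\<Sum>i\<in>I. P i * c i) \<le> (\<Sum>i\<in>I. P i * c i * f i)"
    and eta: "\<forall>Q. is_pmf_on I Q \<and> t \<le> expect_on I Q f \<longrightarrow> exp2_neg (real n) (kl_div I Q P) \<le> \<eta>"
  shows "(\<Sum>i\<in>I. P i * c i) ^ n \<le> \<eta>"
proof -
  have "\<forall>i\<in>I. 0 \<le> P i" using assms(1) unfolding is_pmf_on_def by simp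
  then have "exp2_neg (real n) (kl_div I (tilt I P c) P) = (\<Sum>i\<in>I. P i * c i) ^ n"
    using assms(2-4) by (rule exp2_neg_kl_div_tilt)
  moreover have "t \<le> expect_on I (tilt I P c) f"
    using mean Z unfolding expect_on_tilt by (simp add: le_divide_eq)
  ultimately show ?thesis using eta is_pmf_on_tilt[OF assms(1-3)] by force
qed

lemma multinomial_tail_le_chernoff:
  fixes a f :: "'b \<Rightarrow> real"
  assumes "finite I" "\<forall>i\<in>I. 0 \<le> a i" "0 \<le> l"
  shows "(\<Sum>w\<in>{w\<in>count_vectors I n. real n * t \<le> (\<Sum>i\<in>I. real (w i) * f i)}. multinomial_term I n a w)
    \<le> (\<Sum>i\<in>I. a i * 2 powr (l * (f i - t))) ^ n"
proof -
  define c where "c i = 2 powr (l * (f i - t))" for i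
  let ?A = "{w\<in>count_vectors I n. real n * t \<le> (\<Sum>i\<in>I. real (w i) * f i)}"
  have "multinomial_term I n a w \<le> multinomial_term I n (\<lambda>i. a i * c i) w" if w: "w \<in> ?A" for w
  proof -
    have "(\<Sum>i\<in>I. real (w i)) = real n" using w unfolding count_vectors_def by auto
    moreover have "(\<Sum>i\<in>I. real (w i) * (l * (f i - t)))
        = l * (\<Sum>i\<in>I. real (w i) * f i) - l * t * (\<Sum>i\<in>I. real (w i))"
      by (simp add: algebra_simps sum_subtractf sum_distrib_left)
    ultimately have "(\<Sum>i\<in>I. real (w i) * (l * (f i - t))) = l * ((\<Sum>i\<in>I. real (w i) * f i) - real n * t)"
      by (simp add: algebra_simps)
    also have "\<dots> \<ge> 0" using w assms(3) by simp
    finally have "1 \<le> (\<Prod>i\<in>I. c i ^ w i)"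
      unfolding c_def by (simp add: powr_sum[symmetric] powr_power mult.commute ge_one_powr_ge_zero)
    moreover have "multinomial_term I n (\<lambda>i. a i * c i) w = multinomial_term I n a w * (\<Prod>i\<in>I. c i ^ w i)"
      unfolding multinomial_term_def by (simp add: power_mult_distrib prod.distrib)
    moreover have "0 \<le> multinomial_term I n a w"
      using assms(2) by (rule multinomial_term_nonneg)
    ultimately show ?thesis by (simp add: mult_le_cancel_left1)
  qed
  then have "(\<Sum>w\<in>?A. multinomial_term I n a w) \<le> (\<Sum>w\<in>?A. multinomial_term I n (\<lambda>i. a i * c i) w)"
    by (rule sum_mono)
  also have "\<dots> \<le> (\<Sum>w\<in>count_vectors I n. multinomial_term I n (\<lambda>i. a i * c i) w)"
    using assms(1,2) by (intro sum_mono2 finite_count_vectors multinomial_term_nonneg) (auto simp: c_def)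
  also have "\<dots> = (\<Sum>i\<in>I. a i * c i) ^ n"
    using assms(1) by (rule multinomial_theorem[symmetric])
  finally show ?thesis unfolding c_def .
qed

lemma sum_mult_le_if_dominated:
  fixes P Q c :: "'b \<Rightarrow> real"
  assumes "finite I" "sum Q I = sum P I" "\<forall>i\<in>I. c0 \<le> c i" "\<forall>i\<in>I. c i \<noteq> c0 \<longrightarrow> Q i \<le> P i"
  shows "(\<Sum>i\<in>I. Q i * c i) \<le> (\<Sum>i\<in>I. P i * c i)"
proof -
  have "(\<Sum>i\<in>I. Q i * (c i - c0)) \<le> (\<Sum>i\<in>I. P i * (c i - c0))"
    using assms(3,4) by (intro sum_mono) (force intro: mult_right_mono)
  moreover have "(\<Sum>i\<in>I. Q i * c0) = (\<Sum>i\<in>I. P i * c0)"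
    using assms(2) by (simp add: sum_distrib_right[symmetric])
  ultimately show ?thesis
    by (simp add: algebra_simps sum_subtractf)
qed

lemma tendsto_powr_at_top_neg:
  fixes c :: real
  assumes "c < 0"
  shows "((\<lambda>l. 2 powr (l * c)) \<longlongrightarrow> 0) at_top"
proof -
  have "filterlim (\<lambda>l. (c * ln 2) * l) at_bot at_top"
    using assms by (intro filterlim_tendsto_neg_mult_at_bot[OF tendsto_const] filterlim_ident) (auto intro: mult_neg_pos)
  then have "((\<lambda>l. exp ((c * ln 2) * l)) \<longlongrightarrow> 0) at_top"
    by (rule filterlim_compose[OF exp_at_bot])
  then show ?thesis by (simp add: powr_def mult_ac)
qed

lemma tendsto_sum_powr_at_top:
  fixes h g :: "'b \<Rightarrow> real"
  assumes "finite I" "\<forall>i\<in>I. h i \<noteq> 0 \<longrightarrow> g i \<le> 0"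
  shows "((\<lambda>l. \<Sum>i\<in>I. h i * 2 powr (l * g i)) \<longlongrightarrow> (\<Sum>i\<in>{i\<in>I. g i = 0}. h i)) at_top"
proof -
  have "((\<lambda>l. h i * 2 powr (l * g i)) \<longlongrightarrow> (if g i = 0 then h i else 0)) at_top" if "i \<in> I" for i
  proof (cases "g i = 0 \<or> h i = 0")
    case False
    then have "g i < 0" using assms(2) that by force
    then show ?thesis
      using False tendsto_mult[OF tendsto_const tendsto_powr_at_top_neg] by fastforce
  qed auto
  then have "((\<lambda>l. \<Sum>i\<in>I. h i * 2 powr (l * g i)) \<longlongrightarrow> (\<Sum>i\<in>I. if g i = 0 then h i else 0)) at_top"
    by (rule tendsto_sum)
  then show ?thesis using assms(1) by (simp add: sum.inter_filter)
qed

section \<open>A Sanov-type bound for multinomial tails\<close>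

definition excess_mgf :: "'b set \<Rightarrow> ('b \<Rightarrow> real) \<Rightarrow> ('b \<Rightarrow> real) \<Rightarrow> real \<Rightarrow> real \<Rightarrow> real" where
  "excess_mgf I P f t l = (\<Sum>i\<in>I. P i * 2 powr (l * (f i - t)))"

lemma le_kl_bound_if_support_below:
  assumes "finite I" "is_pmf_on I P" "1 \<le> n" "0 \<le> \<eta>"
    and eta: "\<forall>Q. is_pmf_on I Q \<and> t \<le> expect_on I Q f \<longrightarrow> exp2_neg (real n) (kl_div I Q P) \<le> \<eta>"
    and chernoff: "\<forall>l\<ge>0. S \<le> excess_mgf I P f t l ^ n"
    and below: "\<forall>i\<in>I. 0 < P i \<longrightarrow> f i \<le> t"
  shows "S \<le> \<eta>"
proof -
  have P_nonneg: "\<forall>i\<in>I. 0 \<le> P i" using assms(2) unfolding is_pmf_on_def by simp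
  define c where "c i = (if f i = t then 1 else 0 :: real)" for i
  define \<pi> where "\<pi> = (\<Sum>i\<in>I. P i * c i)"
  have "\<forall>i\<in>I. P i \<noteq> 0 \<longrightarrow> f i - t \<le> 0" using below P_nonneg by (auto simp: less_le)
  then have "(excess_mgf I P f t \<longlongrightarrow> \<pi>) at_top"
    unfolding excess_mgf_def \<pi>_def c_def using tendsto_sum_powr_at_top[OF assms(1), of P "\<lambda>i. f i - t"]
    by (simp add: sum.inter_filter[OF assms(1), symmetric] if_distrib cong: if_cong)
  moreover have "\<forall>\<^sub>F l in at_top. S \<le> excess_mgf I P f t l ^ n"
    using chernoff by (intro eventually_mono[OF eventually_ge_at_top[of 0]]) auto
  ultimately have S_le: "S \<le> \<pi> ^ n"
    by (intro tendsto_le[OF trivial_limit_at_top_linorder tendsto_power tendsto_const])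
  show ?thesis
  proof (cases "\<pi> = 0")
    case True
    then show ?thesis using S_le assms(3,4) by (simp add: power_0_left)
  next
    case False
    then have "0 < \<pi>" unfolding \<pi>_def c_def using P_nonneg by (simp add: less_le sum_nonneg)
    moreover have "(\<Sum>i\<in>I. P i * c i * log 2 (c i)) = 0" by (intro sum.neutral) (simp add: c_def)
    moreover have "(\<Sum>i\<in>I. P i * c i * f i) = t * (\<Sum>i\<in>I. P i * c i)"
      unfolding sum_distrib_left by (intro sum.cong) (auto simp: c_def)
    ultimately have "\<pi> ^ n \<le> \<eta>"
      unfolding \<pi>_def using assms(2) eta by (intro tilt_mass_power_le_kl_bound) (auto simp: c_def)
    then show ?thesis using S_le by linarith
  qed
qed

text \<open>Either \<open>l = 0\<close> already gives mean at least \<open>t\<close>, or \<open>k\<close> changes sign: \<open>k l\<close> is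
  \<open>2 powr (l * (f M0 - t))\<close> times a sum whose limit is the positive mass at the top value \<open>f M0\<close>.\<close>
lemma exists_tilt_exponent:
  fixes P f :: "'b \<Rightarrow> real"
  assumes "finite I" "\<forall>i\<in>I. 0 \<le> P i"
    and M0: "M0 \<in> I" "0 < P M0" "t < f M0" and max: "\<forall>i\<in>I. 0 < P i \<longrightarrow> f i \<le> f M0"
  defines "k \<equiv> \<lambda>l. \<Sum>i\<in>I. P i * (f i - t) * 2 powr (l * (f i - t))"
  shows "\<exists>l\<ge>0. 0 \<le> k l \<and> l * k l = 0"
proof (cases "0 \<le> k 0")
  case False
  define R where "R = (\<Sum>i\<in>{i\<in>I. f i - f M0 = 0}. P i * (f i - t))"
  have "\<forall>i\<in>I. P i * (f i - t) \<noteq> 0 \<longrightarrow> f i - f M0 \<le> 0"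
    using assms(2) max by (auto simp: less_le)
  then have lim: "((\<lambda>l. \<Sum>i\<in>I. P i * (f i - t) * 2 powr (l * (f i - f M0))) \<longlongrightarrow> R) at_top"
    unfolding R_def by (rule tendsto_sum_powr_at_top[OF assms(1)])
  have "P M0 * (f M0 - t) \<le> R"
    unfolding R_def using assms(1,2) M0 by (intro member_le_sum) auto
  moreover have "0 < P M0 * (f M0 - t)" using M0 by simp
  ultimately have "\<forall>\<^sub>F l in at_top. 0 \<le> l \<and> 0 < (\<Sum>i\<in>I. P i * (f i - t) * 2 powr (l * (f i - f M0)))"
    using order_tendstoD(1)[OF lim] by (intro eventually_conj eventually_ge_at_top) auto
  then obtain l1 where l1: "0 \<le> l1" "0 < (\<Sum>i\<in>I. P i * (f i - t) * 2 powr (l1 * (f i - f M0)))"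
    using eventually_happens'[OF trivial_limit_at_top_linorder] by blast
  have "k l1 = 2 powr (l1 * (f M0 - t)) * (\<Sum>i\<in>I. P i * (f i - t) * 2 powr (l1 * (f i - f M0)))"
    unfolding k_def sum_distrib_left by (intro sum.cong) (auto simp: powr_add[symmetric] algebra_simps)
  then have "0 < k l1" using l1 by simp
  moreover have "continuous_on {0..l1} k" unfolding k_def by (intro continuous_intros) auto
  ultimately obtain l where "0 \<le> l" "k l = 0"
    using IVT'[of k 0 0 l1] False l1(1) by fastforce
  then show ?thesis by auto
qed auto

lemma le_kl_bound_if_support_above:
  assumes "finite I" "is_pmf_on I P"
    and eta: "\<forall>Q. is_pmf_on I Q \<and> t \<le> expect_on I Q f \<longrightarrow> exp2_neg (real n) (kl_div I Q P) \<le> \<eta>"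
    and chernoff: "\<forall>l\<ge>0. S \<le> excess_mgf I P f t l ^ n"
    and M0: "M0 \<in> I" "0 < P M0" "t < f M0" and max: "\<forall>i\<in>I. 0 < P i \<longrightarrow> f i \<le> f M0"
  shows "S \<le> \<eta>"
proof -
  have P_nonneg: "\<forall>i\<in>I. 0 \<le> P i" using assms(2) unfolding is_pmf_on_def by simp
  obtain l where l: "0 \<le> l" "0 \<le> (\<Sum>i\<in>I. P i * (f i - t) * 2 powr (l * (f i - t)))"
      "l * (\<Sum>i\<in>I. P i * (f i - t) * 2 powr (l * (f i - t))) = 0"
    using exists_tilt_exponent[OF assms(1) P_nonneg M0 max] by blast
  define c where "c i = 2 powr (l * (f i - t))" for i
  have c_nonneg: "\<forall>i\<in>I. 0 \<le> c i" by (simp add: c_def)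
  have "P M0 * c M0 \<le> (\<Sum>i\<in>I. P i * c i)"
    using assms(1) M0(1) P_nonneg c_nonneg by (intro member_le_sum) auto
  moreover have "0 < P M0 * c M0" using M0(2) by (simp add: c_def)
  ultimately have Z_pos: "0 < (\<Sum>i\<in>I. P i * c i)" by linarith
  have "(\<Sum>i\<in>I. P i * c i * log 2 (c i)) = l * (\<Sum>i\<in>I. P i * (f i - t) * 2 powr (l * (f i - t)))"
    unfolding sum_distrib_left c_def by (intro sum.cong) auto
  then have log_eq: "(\<Sum>i\<in>I. P i * c i * log 2 (c i)) = 0" using l(3) by simp
  have "(\<Sum>i\<in>I. P i * c i * f i) - t * (\<Sum>i\<in>I. P i * c i)
      = (\<Sum>i\<in>I. P i * (f i - t) * 2 powr (l * (f i - t)))"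
    unfolding sum_distrib_left c_def by (simp add: algebra_simps sum_subtractf)
  then have mean: "t * (\<Sum>i\<in>I. P i * c i) \<le> (\<Sum>i\<in>I. P i * c i * f i)" using l(2) by simp
  have "excess_mgf I P f t l = (\<Sum>i\<in>I. P i * c i)" by (simp add: excess_mgf_def c_def)
  then show ?thesis
    using chernoff l(1) tilt_mass_power_le_kl_bound[OF assms(2) c_nonneg Z_pos log_eq mean eta] by force
qed

lemma le_kl_bound_if_le_chernoff:
  assumes "finite I" "is_pmf_on I P" "1 \<le> n" "0 \<le> \<eta>"
    and "\<forall>Q. is_pmf_on I Q \<and> t \<le> expect_on I Q f \<longrightarrow> exp2_neg (real n) (kl_div I Q P) \<le> \<eta>"
    and "\<forall>l\<ge>0. S \<le> excess_mgf I P f t l ^ n"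
  shows "S \<le> \<eta>"
proof -
  define supp where "supp = {i\<in>I. 0 < P i}"
  have "supp \<noteq> {}"
  proof
    assume "supp = {}"
    then have "\<forall>i\<in>I. P i = 0" using assms(2) unfolding supp_def is_pmf_on_def by (auto simp: less_le)
    then show False using assms(2) unfolding is_pmf_on_def by simp
  qed
  then have "Max (f ` supp) \<in> f ` supp" using assms(1) unfolding supp_def by simp
  then obtain M0 where M0: "M0 \<in> supp" "f M0 = Max (f ` supp)" by (metis imageE)
  then have max: "\<forall>i\<in>I. 0 < P i \<longrightarrow> f i \<le> f M0"
    using assms(1) unfolding supp_def by auto
  show ?thesis
  proof (cases "f M0 \<le> t")
    case True
    then show ?thesis using le_kl_bound_if_support_below[OF assms] max by force
  next
    case False
    then show ?thesis using le_kl_bound_if_support_above[OF assms(1,2,5,6)] M0 max unfolding supp_def by force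
  qed
qed

lemma multinomial_tail_le_kl_bound:
  fixes P P' f :: "'b \<Rightarrow> real"
  assumes "finite I" "is_pmf_on I P" "is_pmf_on I P'" "\<forall>i\<in>I. 0 \<le> f i"
    and dominated: "\<forall>i\<in>I. f i \<noteq> 0 \<longrightarrow> P' i \<le> P i" and "1 \<le> n" "0 \<le> \<eta>"
    and "\<forall>Q. is_pmf_on I Q \<and> t \<le> expect_on I Q f \<longrightarrow> exp2_neg (real n) (kl_div I Q P) \<le> \<eta>"
  shows "(\<Sum>w\<in>{w\<in>count_vectors I n. real n * t \<le> (\<Sum>i\<in>I. real (w i) * f i)}. multinomial_term I n P' w) \<le> \<eta>"
proof (rule le_kl_bound_if_le_chernoff[OF assms(1,2,6,7,8)], intro allI impI)
  fix l :: real
  assume "0 \<le> l"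
  have P'_nonneg: "\<forall>i\<in>I. 0 \<le> P' i" using assms(3) unfolding is_pmf_on_def by simp
  have "\<forall>i\<in>I. 2 powr (l * (0 - t)) \<le> 2 powr (l * (f i - t))"
    using \<open>0 \<le> l\<close> assms(4) by (auto simp: right_diff_distrib)
  moreover have "\<forall>i\<in>I. 2 powr (l * (f i - t)) \<noteq> 2 powr (l * (0 - t)) \<longrightarrow> P' i \<le> P i"
    using dominated by auto
  moreover have "sum P' I = sum P I" using assms(2,3) unfolding is_pmf_on_def by simp
  ultimately have "(\<Sum>i\<in>I. P' i * 2 powr (l * (f i - t))) \<le> excess_mgf I P f t l"
    unfolding excess_mgf_def using assms(1) by (intro sum_mult_le_if_dominated) auto
  moreover have "0 \<le> (\<Sum>i\<in>I. P' i * 2 powr (l * (f i - t)))" using P'_nonneg by (simp add: sum_nonneg)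
  ultimately show "(\<Sum>w\<in>{w\<in>count_vectors I n. real n * t \<le> (\<Sum>i\<in>I. real (w i) * f i)}. multinomial_term I n P' w)
      \<le> excess_mgf I P f t l ^ n"
    using multinomial_tail_le_chernoff[OF assms(1) P'_nonneg \<open>0 \<le> l\<close>, of n t f]
    by (meson order_trans power_mono)
qed

section \<open>Empirical types\<close>

lemma sum_card_fibres:
  assumes "finite A" "\<forall>k<N. g k \<in> A"
  shows "(\<Sum>a\<in>A. real (card {k. k < N \<and> g k = a})) = real N"
proof -
  have "(\<Sum>a\<in>A. \<Sum>k\<in>{k\<in>{..<N}. g k = a}. 1) = (\<Sum>k<N. 1::real)"
    using assms by (intro sum.group) auto
  then show ?thesis by simp
qed

lemma is_pmf_on_emp_type:
  assumes "finite A" "1 \<le> N" "\<forall>k<N. g k \<in> A"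
  shows "is_pmf_on A (emp_type N g)"
proof -
  have "sum (emp_type N g) A = (\<Sum>a\<in>A. real (card {k. k < N \<and> g k = a})) / real N"
    unfolding emp_type_def by (simp add: sum_divide_distrib)
  moreover have "{k. k < N \<and> g k = a} = {}" if "a \<notin> A" for a using assms(3) that by auto
  ultimately show ?thesis
    using sum_card_fibres[OF assms(1,3)] assms(2) unfolding is_pmf_on_def by (simp add: emp_type_def)
qed

lemma marginal_M_emp_type:
  assumes "\<forall>k<N. u k \<le> 1 \<and> x k \<le> 1"
  shows "marginal_M (emp_type N (\<lambda>k. (m k, u k, x k))) = emp_type N m"
proof
  fix M
  let ?S = "{k. k < N \<and> m k = M}"
  have "{k. k < N \<and> (m k, u k, x k) = (M, U, X)} = {k\<in>?S. (u k, x k) = (U, X)}" for U X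
    by auto
  then have "(\<Sum>U\<le>1. \<Sum>X\<le>1. real (card {k. k < N \<and> (m k, u k, x k) = (M, U, X)}))
      = (\<Sum>(U, X)\<in>{..1::nat} \<times> {..1::nat}. real (card {k\<in>?S. (u k, x k) = (U, X)}))"
    by (simp only: sum.cartesian_product)
  also have "\<dots> = (\<Sum>UX\<in>{..1::nat} \<times> {..1::nat}. \<Sum>k\<in>{k\<in>?S. (u k, x k) = UX}. 1)"
    by (intro sum.cong) auto
  also have "\<dots> = (\<Sum>k\<in>?S. 1)"
    using assms by (intro sum.group) auto
  finally show "marginal_M (emp_type N (\<lambda>k. (m k, u k, x k))) M = emp_type N m M"
    unfolding marginal_M_def emp_type_def by (simp add: sum_divide_distrib[symmetric])
qed

lemma weighted_count_gt_if_emp_type_notin_calP: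
  assumes "1 \<le> n" "\<forall>k<n. (m k, u k, x k) \<in> Walph L"
    and counts: "\<forall>M\<le>L. real n * emp_type n m M \<le> real (c M)" and "\<forall>M\<le>L. 0 \<le> nu M"
    and "emp_type n (\<lambda>k. (m k, u k, x k)) \<notin> calP L Nem n psrc nu \<delta>1"
  shows "real Nem * (expect_on {..L} (binom_mass L psrc) nu + \<delta>1) < (\<Sum>M\<le>L. real (c M) * nu M)"
proof -
  have "finite (Walph L)"
    by (rule finite_subset[of _ "{..L} \<times> {..1} \<times> {..1}"]) (auto simp: Walph_def)
  then have "is_pmf_on (Walph L) (emp_type n (\<lambda>k. (m k, u k, x k)))"
    using assms(1,2) by (rule is_pmf_on_emp_type)
  moreover have "marginal_M (emp_type n (\<lambda>k. (m k, u k, x k))) = emp_type n m"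
    using assms(2) unfolding Walph_def by (intro marginal_M_emp_type) auto
  ultimately have "real Nem / real n * (expect_on {..L} (binom_mass L psrc) nu + \<delta>1)
      < expect_on {..L} (emp_type n m) nu"
    using assms(5) unfolding calP_def by auto
  then have "real Nem * (expect_on {..L} (binom_mass L psrc) nu + \<delta>1)
      < (\<Sum>M\<le>L. real n * emp_type n m M * nu M)"
    using assms(1) unfolding expect_on_def by (simp add: field_simps sum_distrib_left)
  also have "\<dots> \<le> (\<Sum>M\<le>L. real (c M) * nu M)"
    using counts assms(4) by (intro sum_mono mult_right_mono) auto
  finally show ?thesis .
qed

lemma prob_in_finite_set:
  assumes "finite A"
  shows "measure_pmf.prob p {\<omega>. V \<omega> \<in> A} = (\<Sum>w\<in>A. measure_pmf.prob p {\<omega>. V \<omega> = w})"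
proof -
  have "measure_pmf.prob p {\<omega>. V \<omega> \<in> A} = measure_pmf.prob (map_pmf V p) A"
    by (simp add: vimage_def)
  also have "\<dots> = (\<Sum>w\<in>A. pmf (map_pmf V p) w)"
    using assms by (rule measure_measure_pmf_finite)
  finally show ?thesis by (simp add: pmf_map vimage_def)
qed

lemma prob_weighted_count_ge:
  fixes v :: "'a \<Rightarrow> 'b \<Rightarrow> nat"
  assumes "finite I" "\<forall>\<omega>. sum (v \<omega>) I = n"
    and multinomial: "\<forall>w\<in>count_vectors I n. measure_pmf.prob p {\<omega>. \<forall>i\<in>I. v \<omega> i = w i} = multinomial_term I n a w"
  shows "measure_pmf.prob p {\<omega>. s \<le> (\<Sum>i\<in>I. real (v \<omega> i) * f i)}
    = (\<Sum>w\<in>{w\<in>count_vectors I n. s \<le> (\<Sum>i\<in>I. real (w i) * f i)}. multinomial_term I n a w)"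
proof -
  define V where "V \<omega> i = (if i \<in> I then v \<omega> i else 0)" for \<omega> i
  let ?A = "{w\<in>count_vectors I n. s \<le> (\<Sum>i\<in>I. real (w i) * f i)}"
  have "V \<omega> \<in> count_vectors I n" for \<omega>
    using assms(2) unfolding V_def count_vectors_def by (simp add: sum.If_cases)
  moreover have "(\<Sum>i\<in>I. real (V \<omega> i) * f i) = (\<Sum>i\<in>I. real (v \<omega> i) * f i)" for \<omega>
    unfolding V_def by simp
  ultimately have "{\<omega>. s \<le> (\<Sum>i\<in>I. real (v \<omega> i) * f i)} = {\<omega>. V \<omega> \<in> ?A}" by auto
  moreover have "finite ?A" using finite_count_vectors[OF assms(1)] by simp
  ultimately have "measure_pmf.prob p {\<omega>. s \<le> (\<Sum>i\<in>I. real (v \<omega> i) * f i)}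
      = (\<Sum>w\<in>?A. measure_pmf.prob p {\<omega>. V \<omega> = w})"
    by (simp only: prob_in_finite_set)
  also have "\<dots> = (\<Sum>w\<in>?A. multinomial_term I n a w)"
  proof (intro sum.cong refl)
    fix w assume "w \<in> ?A"
    then have "w \<in> count_vectors I n" by simp
    moreover from this have "{\<omega>. V \<omega> = w} = {\<omega>. \<forall>i\<in>I. v \<omega> i = w i}"
      unfolding V_def count_vectors_def by (auto simp: fun_eq_iff)
    ultimately show "measure_pmf.prob p {\<omega>. V \<omega> = w} = multinomial_term I n a w"
      using multinomial by simp
  qed
  finally show ?thesis .
qed

lemma prob_UN_Diff_eq_0:
  assumes "finite K" "\<forall>M\<in>K. A M \<subseteq> D \<and> measure_pmf.prob p (A M) / measure_pmf.prob p D = 1"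
  shows "measure_pmf.prob p (\<Union>M\<in>K. D - A M) = 0"
proof -
  have "measure_pmf.prob p (D - A M) = 0" if "M \<in> K" for M
  proof -
    have "measure_pmf.prob p (A M) = measure_pmf.prob p D"
      using assms(2) that by (metis div_0 divide_eq_1_iff zero_neq_one)
    then show ?thesis using assms(2) that by (simp add: measure_pmf.finite_measure_Diff)
  qed
  then have "(\<Sum>M\<in>K. measure_pmf.prob p (D - A M)) = 0" by simp
  moreover have "measure_pmf.prob p (\<Union>M\<in>K. D - A M) \<le> (\<Sum>M\<in>K. measure_pmf.prob p (D - A M))"
    using assms(1) by (intro measure_pmf.finite_measure_subadditive_finite) auto
  ultimately show ?thesis by (simp add: measure_le_0_iff)
qed

lemma prob_le_if_subset_Un_null:
  assumes "E \<subseteq> F \<union> G" "measure_pmf.prob p G = 0"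
  shows "measure_pmf.prob p E \<le> measure_pmf.prob p F"
proof -
  have "measure_pmf.prob p E \<le> measure_pmf.prob p (F \<union> G)"
    using assms(1) by (intro measure_pmf.finite_measure_mono) auto
  also have "\<dots> \<le> measure_pmf.prob p F + measure_pmf.prob p G"
    by (intro measure_Un_le) auto
  finally show ?thesis using assms(2) by simp
qed

theorem proposition1:
  fixes L Nem :: nat and psrc \<eta>1 \<delta>1 :: real and nu :: "nat \<Rightarrow> real"
    and Pr :: "'a pmf" and v :: "'a \<Rightarrow> nat \<Rightarrow> nat" and N :: "'a \<Rightarrow> nat"
    and m u x :: "'a \<Rightarrow> nat \<Rightarrow> nat"
  assumes L: "L \<ge> 2" and Nem: "Nem \<ge> 1" and psrc: "0 \<le> psrc" "psrc \<le> 1"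
    and nu_nonneg: "\<forall>M\<le>L. 0 \<le> nu M"
    and nu_zero: "\<forall>M\<le>L. real M < real L * psrc \<longrightarrow> nu M = 0"
    and eta_nonneg: "0 \<le> \<eta>1"
    and eta: "\<forall>Q\<in>calQ L psrc nu \<delta>1. exp2_neg (real Nem) (kl_div {..L} Q (binom_mass L psrc)) \<le> \<eta>1"
    and v_sum: "\<forall>\<omega>. (\<Sum>M\<le>L. v \<omega> M) = Nem"
    and in_W: "\<forall>\<omega> k. 1 \<le> N \<omega> \<longrightarrow> k < N \<omega> \<longrightarrow> (m \<omega> k, u \<omega> k, x \<omega> k) \<in> Walph L"
    and condA: "\<exists>podd. 0 \<le> podd \<and> podd \<le> psrc \<and>
       (\<forall>w::nat \<Rightarrow> nat. (\<Sum>M\<le>L. w M) = Nem \<longrightarrow>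
          measure_pmf.prob Pr {\<omega>. \<forall>M\<le>L. v \<omega> M = w M}
            = fact Nem / (\<Prod>M\<le>L. fact (w M)) * (\<Prod>M\<le>L. binom_mass L podd M ^ w M))"
    and condB: "\<forall>M\<le>L.
       measure_pmf.prob Pr {\<omega>. 1 \<le> N \<omega> \<and> real (N \<omega>) * emp_type (N \<omega>) (m \<omega>) M \<le> real (v \<omega> M)}
         / measure_pmf.prob Pr {\<omega>. 1 \<le> N \<omega>} = 1"
  shows "measure_pmf.prob Pr {\<omega>. 1 \<le> N \<omega> \<and>
            emp_type (N \<omega>) (\<lambda>k. (m \<omega> k, u \<omega> k, x \<omega> k)) \<notin> calP L Nem (N \<omega>) psrc nu \<delta>1}
         \<le> \<eta>1"
proof -
  obtain podd where podd: "0 \<le> podd" "podd \<le> psrc"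
    and v_law: "\<forall>w. (\<Sum>M\<le>L. w M) = Nem \<longrightarrow> measure_pmf.prob Pr {\<omega>. \<forall>M\<le>L. v \<omega> M = w M}
          = multinomial_term {..L} Nem (binom_mass L podd) w"
    using condA unfolding multinomial_term_def by blast
  define t where "t = expect_on {..L} (binom_mass L psrc) nu + \<delta>1"
  define D where "D = {\<omega>. 1 \<le> N \<omega>}"
  define A where "A M = {\<omega>. 1 \<le> N \<omega> \<and> real (N \<omega>) * emp_type (N \<omega>) (m \<omega>) M \<le> real (v \<omega> M)}" for M
  have "measure_pmf.prob Pr {\<omega>. real Nem * t \<le> (\<Sum>M\<le>L. real (v \<omega> M) * nu M)}
      = (\<Sum>w\<in>{w\<in>count_vectors {..L} Nem. real Nem * t \<le> (\<Sum>M\<le>L. real (w M) * nu M)}.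
           multinomial_term {..L} Nem (binom_mass L podd) w)"
    using v_sum v_law by (intro prob_weighted_count_ge) (simp_all add: count_vectors_def Ball_def)
  also have "\<dots> \<le> \<eta>1"
  proof (rule multinomial_tail_le_kl_bound)
    show "\<forall>M\<in>{..L}. nu M \<noteq> 0 \<longrightarrow> binom_mass L podd M \<le> binom_mass L psrc M"
      using nu_zero podd by (auto intro!: binom_mass_mono simp: not_less)
  qed (use psrc podd nu_nonneg Nem eta_nonneg eta in \<open>auto simp: is_pmf_on_binom_mass calQ_def t_def\<close>)
  finally have tail: "measure_pmf.prob Pr {\<omega>. real Nem * t \<le> (\<Sum>M\<le>L. real (v \<omega> M) * nu M)} \<le> \<eta>1" .
  have "{\<omega>. 1 \<le> N \<omega> \<and> emp_type (N \<omega>) (\<lambda>k. (m \<omega> k, u \<omega> k, x \<omega> k)) \<notin> calP L Nem (N \<omega>) psrc nu \<delta>1}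
      \<subseteq> {\<omega>. real Nem * t \<le> (\<Sum>M\<le>L. real (v \<omega> M) * nu M)} \<union> (\<Union>M\<le>L. D - A M)"
    using weighted_count_gt_if_emp_type_notin_calP in_W nu_nonneg
    unfolding t_def A_def D_def by (fastforce simp: less_imp_le)
  moreover have "measure_pmf.prob Pr (\<Union>M\<le>L. D - A M) = 0"
    using condB by (intro prob_UN_Diff_eq_0) (auto simp: A_def D_def)
  ultimately show ?thesis
    using tail by (meson prob_le_if_subset_Un_null order_trans)
qed

end
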